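(* For every even integer $s\ge4$ there exists a linear $(2,s-1,s,2)$-AONT.
   Context: A linear $(t_i,t_o,s,q)$-AONT is given by an invertible $s\times s$ matrix $M$ over $\mathbb{F}_q$ defining the map $\mathbf{x}\mapsto\mathbf{y}=\mathbf{x}M^{-1}$ on row vectors of $\mathbb{F}_q^s$, such that for every set $I$ of $t_i$ input coordinates and every set $J$ of $s-t_o$ output coordinates, the pair $((x_i)_{i\in I},(y_j)_{j\in J})$ takes every value in $\mathbb{F}_q^{t_i+s-t_o}$ equally often as $\mathbf{x}$ ranges over $\mathbb{F}_q^s$. Equivalently, $M$ is invertible and every $t_o\times t_i$ submatrix of $M$ has rank $t_i$. *)

theory Defs
  imports "Jordan_Normal_Form.DL_Rank" "Jordan_Normal_Form.DL_Submatrix"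
begin

definition linear_AONT :: "nat \<Rightarrow> nat \<Rightarrow> nat \<Rightarrow> nat \<Rightarrow> 'a::{finite,field} mat \<Rightarrow> bool" where
  "linear_AONT ti to s q M \<longleftrightarrow>
     card (UNIV :: 'a set) = q \<and> M \<in> carrier_mat s s \<and> invertible_mat M \<and>
     (\<forall>R C. R \<subseteq> {..<s} \<longrightarrow> C \<subseteq> {..<s} \<longrightarrow> card R = to \<longrightarrow> card C = ti \<longrightarrow>
        vec_space.rank to (submatrix M R C) = ti)"

end

theory Submission
  imports Defs
begin

text \<open>Over \<open>GF(2)\<close> take \<open>M = J - I\<close>, the all-ones matrix with zero diagonal. Since
\<open>J\<^sup>2 = s J\<close>, we get \<open>M\<^sup>2 = (s - 2) J + I = I\<close> for even \<open>s\<close>, so \<open>M\<close> is invertible.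
Given two columns \<open>c\<^sub>0, c\<^sub>1\<close> and \<open>s - 1 \<ge> 3\<close> rows, at most one row is missing, so some
chosen row is \<open>c\<^sub>0\<close> or \<open>c\<^sub>1\<close>, contributing \<open>(0, 1)\<close> or \<open>(1, 0)\<close> to the submatrix, and some
chosen row is neither, contributing \<open>(1, 1)\<close>; these two rows already have rank 2.\<close>

lemma two_eq_zero_if_card_UNIV_2:
  assumes "card (UNIV :: 'a::{finite,field} set) = 2"
  shows "(2::'a) = 0"
proof (rule ccontr)
  assume "(2::'a) \<noteq> 0"
  moreover have "(2::'a) \<noteq> 1"
    by (metis add_cancel_right_right one_add_one zero_neq_one)
  ultimately have "card {0::'a, 1, 2} = 3" by simp
  moreover have "card {0::'a, 1, 2} \<le> card (UNIV :: 'a set)" by (rule card_mono) auto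
  ultimately show False using assms by simp
qed

lemma of_nat_even_eq_0:
  assumes "(2::'a::semiring_1) = 0" and "even n"
  shows "(of_nat n :: 'a) = 0"
  using assms by (auto elim!: evenE)

definition ones_off_diag_mat :: "nat \<Rightarrow> 'a::{zero,one} mat" where
  "ones_off_diag_mat n = mat n n (\<lambda>(i, j). if i = j then 0 else 1)"

lemma dim_ones_off_diag_mat [simp]:
  "dim_row (ones_off_diag_mat n) = n" "dim_col (ones_off_diag_mat n) = n"
  by (simp_all add: ones_off_diag_mat_def)

lemma ones_off_diag_mat_index [simp]:
  "i < n \<Longrightarrow> j < n \<Longrightarrow> ones_off_diag_mat n $$ (i, j) = (if i = j then 0 else 1)"
  by (simp add: ones_off_diag_mat_def)

lemma ones_off_diag_mat_squared:
  assumes "2 \<le> n" and "of_nat (n - 2) = (0::'a::semiring_1)"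
  shows "ones_off_diag_mat n * ones_off_diag_mat n = (1\<^sub>m n :: 'a mat)"
proof (rule eq_matI)
  let ?M = "ones_off_diag_mat n :: 'a mat"
  fix i k assume "i < dim_row (1\<^sub>m n :: 'a mat)" "k < dim_col (1\<^sub>m n :: 'a mat)"
  then have i: "i < n" and k: "k < n" by auto
  have "(?M * ?M) $$ (i, k) = (\<Sum>j<n. (if i = j then 0 else 1) * (if j = k then 0 else 1))"
    using i k by (simp add: ones_off_diag_mat_def scalar_prod_def lessThan_atLeast0)
  also have "\<dots> = (\<Sum>j \<in> {..<n} - {i, k}. 1)"
    by (rule sum.mono_neutral_cong_right) auto
  also have "\<dots> = of_nat (n - card {i, k})"
    using i k by (simp add: card_Diff_subset)
  finally have "(?M * ?M) $$ (i, k) = of_nat (n - card {i, k})" .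
  moreover have "n - 1 = Suc (n - 2)" using assms(1) by simp
  ultimately show "(?M * ?M) $$ (i, k) = 1\<^sub>m n $$ (i, k)"
    using i k assms(2) by (cases "i = k") (simp_all add: numeral_2_eq_2)
qed simp_all

lemma mult_mat_vec_unit_vec:
  fixes A :: "'a::semiring_1 mat"
  assumes "A \<in> carrier_mat n nc" and "i < nc"
  shows "A *\<^sub>v unit_vec nc i = col A i"
proof -
  have "A *\<^sub>v unit_vec nc i = col (A * 1\<^sub>m nc) i"
    using col_mult2[OF assms(1) one_carrier_mat assms(2)] assms(2) by simp
  then show ?thesis using assms(1) by simp
qed

lemma rank_eq_dim_col_if_kernel_trivial:
  fixes A :: "'a::field mat"
  assumes A: "A \<in> carrier_mat n nc"
    and kernel: "\<And>v. v \<in> carrier_vec nc \<Longrightarrow> A *\<^sub>v v = 0\<^sub>v n \<Longrightarrow> v = 0\<^sub>v nc"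
  shows "vec_space.rank n A = nc"
proof -
  interpret vec_space "TYPE('a)" n .
  have distinct: "distinct (cols A)"
  proof (unfold distinct_conv_nth, intro allI impI)
    fix i j assume "i < length (cols A)" "j < length (cols A)" "i \<noteq> j"
    then have i: "i < nc" and j: "j < nc" and "i \<noteq> j" using A by auto
    show "cols A ! i \<noteq> cols A ! j"
    proof
      assume "cols A ! i = cols A ! j"
      then have "A *\<^sub>v (unit_vec nc i - unit_vec nc j) = 0\<^sub>v n"
        using A i j by (simp add: mult_minus_distrib_mat_vec mult_mat_vec_unit_vec)
      then have "unit_vec nc i - unit_vec nc j = (0\<^sub>v nc :: 'a vec)" by (intro kernel) auto
      then have "(unit_vec nc i - unit_vec nc j) $ i = (0 :: 'a)" using i by simp
      then show False using i j \<open>i \<noteq> j\<close> by simp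
    qed
  qed
  have "lin_indpt (set (cols A))"
    using lin_depE[OF A _ distinct] kernel by metis
  then show ?thesis using lin_indpt_full_rank[OF A distinct] by blast
qed

lemma submatrix_mult_vec_row:
  assumes "\<rho> \<in> R" "\<rho> < dim_row A" "C \<subseteq> {..<dim_col A}" "v \<in> carrier_vec (card C)"
  obtains i where "i < dim_row (submatrix A R C)"
    and "(submatrix A R C *\<^sub>v v) $ i = (\<Sum>j<card C. A $$ (\<rho>, pick C j) * v $ j)"
proof
  let ?i = "card {a \<in> R. a < \<rho>}"
  have "{a \<in> R. a < \<rho>} \<subset> {a. a < dim_row A \<and> a \<in> R}" using assms(1,2) by auto
  then show i: "?i < dim_row (submatrix A R C)"
    unfolding dim_submatrix by (simp add: psubset_card_mono)
  have "{j. j < dim_col A \<and> j \<in> C} = C" using assms(3) by auto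
  then have dim_col: "dim_col (submatrix A R C) = card C" by (simp add: dim_submatrix)
  have "(submatrix A R C *\<^sub>v v) $ ?i = (\<Sum>j<card C. submatrix A R C $$ (?i, j) * v $ j)"
    using i dim_col assms(4) by (simp add: scalar_prod_def lessThan_atLeast0)
  also have "\<dots> = (\<Sum>j<card C. A $$ (\<rho>, pick C j) * v $ j)"
  proof (rule sum.cong)
    fix j assume "j \<in> {..<card C}"
    then have "submatrix A R C $$ (?i, j) = A $$ (pick R ?i, pick C j)"
      by (intro submatrix_index) (use i dim_col in \<open>simp_all add: dim_submatrix\<close>)
    then show "submatrix A R C $$ (?i, j) * v $ j = A $$ (\<rho>, pick C j) * v $ j"
      by (simp add: pick_card_in_set[OF assms(1)])
  qed simp
  finally show "(submatrix A R C *\<^sub>v v) $ ?i = (\<Sum>j<card C. A $$ (\<rho>, pick C j) * v $ j)" .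
qed

lemma rank_submatrix_ones_off_diag_mat:
  assumes R: "R \<subseteq> {..<n}" and C: "C \<subseteq> {..<n}" "card C = 2"
    and meets: "R \<inter> C \<noteq> {}" and leaves: "\<not> R \<subseteq> C"
  shows "vec_space.rank (card R) (submatrix (ones_off_diag_mat n :: 'a::field mat) R C) = 2"
proof -
  let ?B = "submatrix (ones_off_diag_mat n :: 'a mat) R C"
  have "{i. i < n \<and> i \<in> R} = R" "{j. j < n \<and> j \<in> C} = C" using R C by auto
  then have B: "?B \<in> carrier_mat (card R) 2"
    by (intro carrier_matI) (simp_all only: dim_submatrix dim_ones_off_diag_mat C(2))
  define c0 c1 where "c0 = pick C 0" and "c1 = pick C 1"
  have "c0 < c1" using pick_mono_le[of 1 C 0] C(2) by (simp add: c0_def c1_def)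
  have "{c0, c1} \<subseteq> C" using pick_in_set_le[of 0 C] pick_in_set_le[of 1 C] C(2) by (simp add: c0_def c1_def)
  moreover have "finite C" using C(2) by (simp add: card_ge_0_finite)
  ultimately have C_eq: "C = {c0, c1}"
    using card_subset_eq[of C "{c0, c1}"] \<open>c0 < c1\<close> C(2) by simp
  have row: "(if \<rho> = c0 then 0 else 1) * v $ 0 + (if \<rho> = c1 then 0 else 1) * v $ 1 = 0"
    if \<rho>: "\<rho> \<in> R" and v: "v \<in> carrier_vec 2" and kernel: "?B *\<^sub>v v = 0\<^sub>v (card R)" for \<rho> v
  proof -
    obtain i where i: "i < dim_row ?B"
      and "(?B *\<^sub>v v) $ i = (\<Sum>j<card C. ones_off_diag_mat n $$ (\<rho>, pick C j) * v $ j)"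
      by (rule submatrix_mult_vec_row[of \<rho> R "ones_off_diag_mat n" C v]) (use \<rho> v R C in auto)
    moreover have "(?B *\<^sub>v v) $ i = 0" using i B kernel by simp
    moreover have "\<rho> < n" "c0 < n" "c1 < n" using \<rho> R C \<open>{c0, c1} \<subseteq> C\<close> by auto
    moreover have "(\<Sum>j<card C. ones_off_diag_mat n $$ (\<rho>, pick C j) * v $ j)
        = ones_off_diag_mat n $$ (\<rho>, c0) * v $ 0 + ones_off_diag_mat n $$ (\<rho>, c1) * v $ 1"
      unfolding C(2) c0_def c1_def by (simp add: numeral_2_eq_2 del: pick.simps)
    ultimately show ?thesis by simp
  qed
  show ?thesis
  proof (rule rank_eq_dim_col_if_kernel_trivial[OF B])
    fix v :: "'a vec" assume v: "v \<in> carrier_vec 2" "?B *\<^sub>v v = 0\<^sub>v (card R)"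
    obtain \<rho> where "\<rho> \<in> R" "\<rho> \<noteq> c0" "\<rho> \<noteq> c1" using leaves C_eq by blast
    then have sum: "v $ 0 + v $ 1 = 0" using row[OF \<open>\<rho> \<in> R\<close> v] by simp
    obtain \<gamma> where "\<gamma> \<in> R" "\<gamma> = c0 \<or> \<gamma> = c1" using meets C_eq by blast
    then have "v $ 1 = 0 \<or> v $ 0 = 0" using row[OF \<open>\<gamma> \<in> R\<close> v] \<open>c0 < c1\<close> by auto
    then have "v $ 0 = 0" "v $ 1 = 0" using sum by auto
    then show "v = 0\<^sub>v 2" using v(1) by (intro eq_vecI) (auto simp: less_2_cases_iff)
  qed
qed

theorem mainTheorem13:
  assumes "card (UNIV :: 'a::{finite,field} set) = 2"
    and "even s" and "4 \<le> s"
  shows "\<exists>M :: 'a mat. linear_AONT 2 (s - 1) s 2 M"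
proof
  let ?M = "ones_off_diag_mat s :: 'a mat"
  have "(2::'a) = 0" using assms(1) by (rule two_eq_zero_if_card_UNIV_2)
  then have "of_nat (s - 2) = (0::'a)" using assms(2,3) by (intro of_nat_even_eq_0) auto
  then have "?M * ?M = 1\<^sub>m s" using assms(3) by (intro ones_off_diag_mat_squared) auto
  then have "invertible_mat ?M" unfolding invertible_mat_def inverts_mat_def by auto
  moreover have "vec_space.rank (s - 1) (submatrix ?M R C) = 2"
    if R: "R \<subseteq> {..<s}" "card R = s - 1" and C: "C \<subseteq> {..<s}" "card C = 2" for R C
  proof -
    have "finite R" "finite C" using R(1) C(1) by (auto intro: finite_subset)
    moreover have "card (R \<union> C) \<le> s" using R(1) C(1) card_mono[of "{..<s}" "R \<union> C"] by simp
    ultimately have "R \<inter> C \<noteq> {}" using card_Un_Int[of R C] R(2) C(2) assms(3) by auto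
    moreover have "\<not> R \<subseteq> C" using card_mono[OF \<open>finite C\<close>, of R] R(2) C(2) assms(3) by auto
    ultimately show ?thesis using rank_submatrix_ones_off_diag_mat[OF R(1) C] R(2) by simp
  qed
  ultimately show "linear_AONT 2 (s - 1) s 2 ?M" unfolding linear_AONT_def using assms(1) by auto
qed

end
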